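(* Let $p$ be an odd prime and $q\in\mathbb C_p$ with $|1-q|_p<p^{-1/(p-1)}$. For $h\in\mathbb Z$, $n\in\mathbb Z_+$, $r\in\mathbb N$ and $x\in\mathbb Z_p$, $$E_{n,q}^{(h,-r)}(x)=\frac{1}{2^r}\sum_{m=0}^r\frac{1}{[m]_q!}\sum_{k=0}^mq^{(h-r)m}S_1(m-1,k;q)(-1)^k[r]_q^{m-k}[x+m]_q^n.$$
   Context: For $x\in\mathbb Z_p$, $[x]_q=\frac{1-q^x}{1-q}$; $[m]_q!=[m]_q\cdots[1]_q$, $[0]_q!=1$. The fermionic $p$-adic integral is $\int_{\mathbb Z_p}f(x)\,d\mu_{-1}(x)=\lim_{N\to\infty}\sum_{x=0}^{p^N-1}f(x)(-1)^x$. The extended higher-order Nörlund type $q$-Euler polynomials are $E_{n,q}^{(h,-r)}(x)=\frac{1}{(1-q)^n}\sum_{l=0}^n\binom nl(-1)^l\frac{q^{lx}}{\int_{\mathbb Z_p}\cdots\int_{\mathbb Z_p}q^{l(x_1+\cdots+x_r)}q^{\sum_{j=1}^r(h-j)x_j}\,d\mu_{-1}(x_1)\cdots d\mu_{-1}(x_r)}$ (iterated fermionic integrals). The $q$-Stirling numbers of the first kind are defined by $\prod_{k=1}^N(1+[k]_qz)=\sum_{k\ge0}S_1(N,k;q)z^k$ for $N\ge-1$ (empty product $=1$ for $N\le0$; $S_1(N,k;q)=0$ for $k>N$, and in particular $S_1(-1,0;q)=1$). *)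

theory Defs
  imports Complex_Main "HOL-Computational_Algebra.Polynomial"
begin

definition conv_abs :: "('a::field \<Rightarrow> real) \<Rightarrow> (nat \<Rightarrow> 'a) \<Rightarrow> 'a \<Rightarrow> bool" where
  "conv_abs av s L \<longleftrightarrow> (\<forall>e>0. \<exists>N. \<forall>n\<ge>N. av (s n - L) < e)"

definition lim_abs :: "('a::field \<Rightarrow> real) \<Rightarrow> (nat \<Rightarrow> 'a) \<Rightarrow> 'a" where
  "lim_abs av s = (THE L. conv_abs av s L)"

definition nonarch_abs :: "('a::field \<Rightarrow> real) \<Rightarrow> bool" where
  "nonarch_abs av \<longleftrightarrow> (\<forall>x. av x \<ge> 0) \<and> (\<forall>x. av x = 0 \<longleftrightarrow> x = 0)
     \<and> (\<forall>x y. av (x * y) = av x * av y) \<and> (\<forall>x y. av (x + y) \<le> max (av x) (av y))"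

definition complete_abs :: "('a::field \<Rightarrow> real) \<Rightarrow> bool" where
  "complete_abs av \<longleftrightarrow> (\<forall>s. (\<forall>e>0. \<exists>N. \<forall>m\<ge>N. \<forall>n\<ge>N. av (s m - s n) < e) \<longrightarrow> (\<exists>L. conv_abs av s L))"

definition Cp_like :: "nat \<Rightarrow> ('a::field_char_0 \<Rightarrow> real) \<Rightarrow> bool" where
  "Cp_like p av \<longleftrightarrow> nonarch_abs av \<and> complete_abs av \<and> av (of_nat p) = 1 / real p
     \<and> (\<forall>f::'a poly. degree f > 0 \<longrightarrow> (\<exists>z. poly f z = 0))"

section \<open>p-adic integers as coherent residue sequences\<close>

definition zp :: "nat \<Rightarrow> (nat \<Rightarrow> int) \<Rightarrow> bool" where
  "zp p x \<longleftrightarrow> (\<forall>N. 0 \<le> x N \<and> x N < int p ^ N) \<and> (\<forall>N. x (Suc N) mod int p ^ N = x N)"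

definition zp_of_int :: "nat \<Rightarrow> int \<Rightarrow> (nat \<Rightarrow> int)" where
  "zp_of_int p k = (\<lambda>N. k mod int p ^ N)"

definition zp_add :: "nat \<Rightarrow> (nat \<Rightarrow> int) \<Rightarrow> (nat \<Rightarrow> int) \<Rightarrow> (nat \<Rightarrow> int)" where
  "zp_add p x y = (\<lambda>N. (x N + y N) mod int p ^ N)"

definition zp_scale :: "nat \<Rightarrow> int \<Rightarrow> (nat \<Rightarrow> int) \<Rightarrow> (nat \<Rightarrow> int)" where
  "zp_scale p k x = (\<lambda>N. (k * x N) mod int p ^ N)"

definition zp_sum :: "nat \<Rightarrow> nat \<Rightarrow> (nat \<Rightarrow> nat \<Rightarrow> int) \<Rightarrow> (nat \<Rightarrow> int)" where
  "zp_sum p r v = (\<lambda>N. (\<Sum>j=1..r. v j N) mod int p ^ N)"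

definition qpow :: "('a::field \<Rightarrow> real) \<Rightarrow> 'a \<Rightarrow> (nat \<Rightarrow> int) \<Rightarrow> 'a" where
  "qpow av q x = lim_abs av (\<lambda>N. q ^ nat (x N))"

definition qbr :: "('a::field \<Rightarrow> real) \<Rightarrow> 'a \<Rightarrow> (nat \<Rightarrow> int) \<Rightarrow> 'a" where
  "qbr av q x = (1 - qpow av q x) / (1 - q)"

definition qnat :: "'a::field \<Rightarrow> nat \<Rightarrow> 'a" where
  "qnat q k = (1 - q ^ k) / (1 - q)"

definition qfact :: "'a::field \<Rightarrow> nat \<Rightarrow> 'a" where
  "qfact q m = (\<Prod>k=1..m. qnat q k)"

text \<open>q-Stirling numbers of the first kind, N \<ge> -1 (empty product for N \<le> 0).\<close>
definition qS1 :: "'a::field \<Rightarrow> int \<Rightarrow> nat \<Rightarrow> 'a" where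
  "qS1 q N k = coeff (\<Prod>i\<in>{1..nat N}. [:1, qnat q i:]) k"

definition fint :: "nat \<Rightarrow> ('a::field \<Rightarrow> real) \<Rightarrow> ((nat \<Rightarrow> int) \<Rightarrow> 'a) \<Rightarrow> 'a" where
  "fint p av f = lim_abs av (\<lambda>N. \<Sum>k<p ^ N. f (zp_of_int p (int k)) * (-1) ^ k)"

text \<open>Iterated integral over x_1,...,x_r (x_1 innermost).\<close>
fun mfint :: "nat \<Rightarrow> ('a::field \<Rightarrow> real) \<Rightarrow> nat \<Rightarrow> ((nat \<Rightarrow> nat \<Rightarrow> int) \<Rightarrow> 'a) \<Rightarrow> 'a" where
  "mfint p av 0 F = F (\<lambda>_. zp_of_int p 0)"
| "mfint p av (Suc r) F = fint p av (\<lambda>y. mfint p av r (\<lambda>v. F (v(Suc r := y))))"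

definition Enq :: "nat \<Rightarrow> ('a::field \<Rightarrow> real) \<Rightarrow> 'a \<Rightarrow> int \<Rightarrow> nat \<Rightarrow> nat \<Rightarrow> (nat \<Rightarrow> int) \<Rightarrow> 'a" where
  "Enq p av q h r n x = 1 / (1 - q) ^ n *
     (\<Sum>l=0..n. of_nat (n choose l) * (-1) ^ l * qpow av q (zp_scale p (int l) x) /
        mfint p av r (\<lambda>v. qpow av q (zp_scale p (int l) (zp_sum p r v)) *
            (\<Prod>j=1..r. qpow av q (zp_scale p (h - int j) (v j)))))"

end

theory Submission
  imports Defs "HOL-Computational_Algebra.Primes"
begin

text \<open>Since \<open>|q - 1| < p powr (-1/(p-1))\<close>, raising to the \<open>p\<close>-th power divides \<open>|w - 1|\<close> by \<open>p\<close>
  for \<open>w\<close> in this disc, so \<open>|q^(p^N) - 1| = |q - 1| / p^N\<close>: the map \<open>a \<mapsto> q^a\<close> extends continuously to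
  \<open>\<int>\<^sub>p\<close>, \<open>q\<close> is not a root of unity and, \<open>p\<close> being odd, every \<open>1 + q^a\<close> is a unit. The fermionic
  integral of \<open>y \<mapsto> c^y\<close> is \<open>2 / (1 + c)\<close>, so the \<open>l\<close>-th denominator in \<open>E_{n,q}^{(h,-r)}(x)\<close> is
  \<open>\<Prod>j=1..r. 2 / (1 + q^(l+h-j))\<close>, whose reciprocal the \<open>q\<close>-binomial theorem expands as
  \<open>2^-r \<Sum>m. q^(m choose 2) [r choose m]_q q^((h-r)m) q^(lm)\<close>. Exchanging the sums over \<open>l\<close> and
  \<open>m\<close>, the binomial theorem in \<open>l\<close> produces \<open>[x+m]_q^n\<close>, and
  \<open>q^(m choose 2) [r]_q \<cdots> [r-m+1]_q = \<Prod>i<m. ([r]_q - [i]_q)\<close> is the reversed generating polynomial of the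
  \<open>q\<close>-Stirling numbers \<open>S_1(m-1,k;q)\<close>.\<close>

section \<open>Non-archimedean absolute values\<close>

locale nonarch_abs_field =
  fixes av :: "'a::field \<Rightarrow> real"
  assumes nonarch: "nonarch_abs av"
begin

lemma av_nonneg: "av x \<ge> 0"
  and av_eq_0_iff [simp]: "av x = 0 \<longleftrightarrow> x = 0"
  and av_mult: "av (x * y) = av x * av y"
  and av_add: "av (x + y) \<le> max (av x) (av y)"
  using nonarch unfolding nonarch_abs_def by auto

lemma av_0 [simp]: "av 0 = 0"
  by simp

lemma av_1 [simp]: "av 1 = 1"
  using av_mult[of 1 1] by simp

lemma av_minus_1 [simp]: "av (-1) = 1"
proof -
  have "(av (-1) - 1) * (av (-1) + 1) = 0"
    using av_mult[of "-1" "-1"] by (simp add: algebra_simps)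
  moreover have "av (-1) + 1 > 0"
    using av_nonneg[of "-1"] by simp
  ultimately show ?thesis by simp
qed

lemma av_uminus [simp]: "av (- x) = av x"
  using av_mult[of "-1" x] by simp

lemma av_minus_commute: "av (x - y) = av (y - x)"
  by (metis av_uminus minus_diff_eq)

lemma av_diff: "av (x - y) \<le> max (av x) (av y)"
  using av_add[of x "- y"] by simp

lemma av_power: "av (x ^ n) = av x ^ n"
  by (induction n) (auto simp: av_mult)

lemma av_inverse: "av (inverse x) = inverse (av x)"
proof (cases "x = 0")
  case False
  then have "av x * av (inverse x) = 1"
    using av_mult[of x "inverse x"] by simp
  then show ?thesis
    using inverse_unique[of "av x" "av (inverse x)"] by simp
qed simp

lemma av_divide: "av (x / y) = av x / av y"
  by (simp add: divide_inverse av_mult av_inverse)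

lemma av_sum_le:
  assumes "\<And>i. i \<in> S \<Longrightarrow> av (f i) \<le> c" and "c \<ge> 0"
  shows "av (sum f S) \<le> c"
  using assms
proof (induction S rule: infinite_finite_induct)
  case (insert i S)
  then have "max (av (f i)) (av (sum f S)) \<le> c"
    by simp
  with insert.hyps show ?case
    using av_add[of "f i" "sum f S"] by (simp del: max.bounded_iff)
qed auto

lemma av_sum_less:
  assumes "\<And>i. i \<in> S \<Longrightarrow> av (f i) < c" and "c > 0"
  shows "av (sum f S) < c"
  using assms
proof (induction S rule: infinite_finite_induct)
  case (insert i S)
  then have "max (av (f i)) (av (sum f S)) < c"
    by simp
  with insert.hyps show ?case
    using av_add[of "f i" "sum f S"] by (simp del: max_less_iff_conj)
qed auto

lemma av_of_nat_le_1: "av (of_nat n) \<le> 1"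
proof (induction n)
  case (Suc n)
  then show ?case
    using av_add[of 1 "of_nat n"] by simp
qed simp

lemma av_of_int_le_1: "av (of_int k) \<le> 1"
  by (cases k rule: int_cases2) (auto simp: av_of_nat_le_1)

lemma av_add_eq_right:
  assumes "av x < av y"
  shows "av (x + y) = av y"
proof -
  have "av (x + y) \<le> av y"
    using av_add[of x y] assms by simp
  moreover have "av y \<le> max (av (x + y)) (av x)"
    using av_add[of "x + y" "- x"] by simp
  ultimately show ?thesis
    using assms by linarith
qed

lemma av_eq_1_if_close_to_1:
  assumes "av (w - 1) < 1"
  shows "av w = 1"
  using av_add_eq_right[of "w - 1" 1] assms by simp

lemma av_power_diff_le:
  assumes "av a = 1" and "av b = 1"
  shows "av (a ^ n - b ^ n) \<le> av (a - b)"
proof -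
  have "av (\<Sum>i<n. b ^ (n - Suc i) * a ^ i) \<le> 1"
    by (rule av_sum_le) (auto simp: av_mult av_power assms)
  then have "av (a - b) * av (\<Sum>i<n. b ^ (n - Suc i) * a ^ i) \<le> av (a - b)"
    using av_nonneg[of "a - b"] by (simp add: mult_left_le)
  then show ?thesis
    by (simp add: power_diff_sumr2 av_mult)
qed

lemma av_power_int_eq_1:
  assumes "av w = 1"
  shows "av (w powi c) = 1"
  using assms by (cases c rule: int_cases2) (auto simp: power_int_minus av_inverse av_power)

lemma av_power_int_minus_1_le:
  assumes "av w = 1"
  shows "av (w powi c - 1) \<le> av (w - 1)"
proof (cases c rule: int_cases2)
  case (nonneg n)
  then show ?thesis
    using av_power_diff_le[OF assms av_1, of n] by simp
next
  case (nonpos n)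
  have "w \<noteq> 0"
    using assms by auto
  then have "w powi c - 1 = (1 - w ^ n) / w ^ n"
    using nonpos by (simp add: power_int_minus field_simps)
  then have "av (w powi c - 1) = av (w ^ n - 1)"
    using assms by (simp add: av_divide av_power av_minus_commute)
  then show ?thesis
    using av_power_diff_le[OF assms av_1, of n] by simp
qed

lemma conv_abs_unique:
  assumes "conv_abs av s L1" and "conv_abs av s L2"
  shows "L1 = L2"
proof -
  have "av (L1 - L2) < e" if "e > 0" for e
  proof -
    obtain N1 where N1: "\<And>n. n \<ge> N1 \<Longrightarrow> av (s n - L1) < e"
      using assms(1) \<open>e > 0\<close> unfolding conv_abs_def by blast
    obtain N2 where N2: "\<And>n. n \<ge> N2 \<Longrightarrow> av (s n - L2) < e"
      using assms(2) \<open>e > 0\<close> unfolding conv_abs_def by blast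
    define n where "n = max N1 N2"
    have "av (L1 - L2) \<le> max (av (s n - L2)) (av (s n - L1))"
      using av_diff[of "s n - L2" "s n - L1"] by simp
    with N1[of n] N2[of n] show ?thesis
      unfolding n_def by linarith
  qed
  then have "av (L1 - L2) \<le> 0"
    by (metis dual_order.refl le_less_linear less_irrefl)
  then show ?thesis
    using av_nonneg[of "L1 - L2"] by simp
qed

lemma lim_abs_eqI: "conv_abs av s L \<Longrightarrow> lim_abs av s = L"
  unfolding lim_abs_def using conv_abs_unique by blast

end

section \<open>Elements close to 1 in a p-adically valued field\<close>

locale padic_abs_field = nonarch_abs_field av for av :: "'a::field \<Rightarrow> real" +
  fixes p :: nat
  assumes prime_p: "prime p" and av_p: "av (of_nat p) = 1 / real p"
begin

lemma p_gt_1: "p > 1"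
  using prime_gt_1_nat[OF prime_p] .

lemma inverse_p_less_1: "1 / real p < 1"
  using p_gt_1 by simp

lemma av_of_nat_coprime:
  assumes "coprime b p"
  shows "av (of_nat b) = 1"
proof -
  obtain u v :: int where uv: "u * int b + v * int p = 1"
    using bezout_int[of "int b" "int p"] assms by (auto simp: coprime_iff_gcd_eq_1)
  have "1 = av (of_int u * of_nat b + of_int v * of_nat p)"
    by (metis av_1 of_int_1 of_int_add of_int_mult of_int_of_nat_eq uv)
  also have "\<dots> \<le> max (av (of_int u) * av (of_nat b)) (av (of_int v) / real p)"
    using av_add[of "of_int u * of_nat b" "of_int v * of_nat p"] by (simp add: av_mult av_p)
  finally have "1 \<le> av (of_int u) * av (of_nat b) \<or> 1 \<le> av (of_int v) / real p"
    by linarith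
  moreover have "av (of_int v) / real p < 1"
    using av_of_int_le_1[of v] inverse_p_less_1 p_gt_1 by (simp add: divide_less_eq)
  moreover have "av (of_int u) * av (of_nat b) \<le> av (of_nat b)"
    using av_of_int_le_1[of u] by (intro mult_left_le_one_le) (auto simp: av_nonneg)
  ultimately show ?thesis
    using av_of_nat_le_1[of b] by linarith
qed

lemma less_1_if_power_less_inverse_p:
  assumes "e \<ge> 0" and "e ^ (p - 1) < 1 / real p"
  shows "e < 1"
  using assms inverse_p_less_1 one_le_power[of e "p - 1"] by linarith

lemma power_div_p_power_less_inverse_p:
  assumes "e \<ge> 0" and "e ^ (p - 1) < 1 / real p"
  shows "(e / real p ^ N) ^ (p - 1) < 1 / real p"
proof -
  have "(e / real p ^ N) ^ (p - 1) \<le> e ^ (p - 1)"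
    using assms(1) p_gt_1 by (intro power_mono) (auto simp: divide_le_eq mult_le_cancel_left1 one_le_power)
  with assms(2) show ?thesis
    by linarith
qed

text \<open>The linear term \<open>p (w - 1)\<close> of the binomial expansion of \<open>(1 + (w - 1))^p\<close> dominates: the
  middle terms carry an extra factor \<open>p\<close> and the top term \<open>(w - 1)^p\<close> is small by the radius bound.\<close>
lemma av_power_p_minus_1:
  assumes "w \<noteq> 1" and "av (w - 1) ^ (p - 1) < 1 / real p"
  shows "av (w ^ p - 1) = av (w - 1) / real p"
proof -
  define u e where "u = w - 1" and "e = av u"
  have "u \<noteq> 0"
    using assms(1) by (simp add: u_def)
  then have e: "e > 0" "e ^ (p - 1) < 1 / real p"
    using assms(2) av_nonneg[of u] by (auto simp: u_def e_def less_le)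
  have "e < 1"
    using less_1_if_power_less_inverse_p e by simp
  define f where "f k = of_nat (p choose k) * u ^ k" for k
  have "w ^ p = (\<Sum>k\<le>p. f k)"
    unfolding f_def u_def using binomial_ring[of "w - 1" 1 p] by simp
  also have "{..p} = insert 0 (insert 1 {2..p})"
    using p_gt_1 by auto
  finally have wp: "w ^ p - 1 = sum f {2..p} + of_nat p * u"
    by (simp add: f_def)
  have "av (sum f {2..p}) < e / real p"
  proof (rule av_sum_less)
    fix k assume k: "k \<in> {2..p}"
    show "av (f k) < e / real p"
    proof (cases "k = p")
      case True
      have "e ^ p = e * e ^ (p - 1)"
        using p_gt_1 by (simp add: power_eq_if)
      also have "\<dots> < e * (1 / real p)"
        using e by (intro mult_strict_left_mono) auto
      finally show ?thesis
        using True by (simp add: f_def av_mult av_power e_def)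
    next
      case False
      then have "p dvd (p choose k)"
        using k prime_p by (intro dvd_choose_prime) auto
      then obtain c where c: "p choose k = p * c" ..
      have "av (of_nat c) * e ^ k \<le> e ^ k"
        using av_of_nat_le_1[of c] e by (intro mult_left_le_one_le) (auto simp: av_nonneg)
      also have "\<dots> \<le> e ^ 2"
        using e k \<open>e < 1\<close> by (intro power_decreasing) auto
      also have "e ^ 2 < e"
        using e \<open>e < 1\<close> by (simp add: power2_eq_square)
      finally show ?thesis
        using p_gt_1 by (simp add: f_def c av_mult av_power av_p e_def divide_strict_right_mono)
    qed
  qed (use e p_gt_1 in simp)
  moreover have "av (of_nat p * u) = e / real p"
    by (simp add: av_mult av_p e_def)
  ultimately show ?thesis
    unfolding wp u_def e_def by (simp add: av_add_eq_right)
qed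

lemma av_power_p_power_minus_1:
  assumes "w \<noteq> 1" and "av (w - 1) ^ (p - 1) < 1 / real p"
  shows "av (w ^ (p ^ N) - 1) = av (w - 1) / real p ^ N"
proof (induction N)
  case (Suc N)
  have "w ^ (p ^ N) \<noteq> 1"
    using Suc assms(1) p_gt_1 by auto
  moreover have "(av (w - 1) / real p ^ N) ^ (p - 1) < 1 / real p"
    using power_div_p_power_less_inverse_p[OF av_nonneg assms(2)] .
  ultimately have "av ((w ^ (p ^ N)) ^ p - 1) = av (w - 1) / real p ^ N / real p"
    using av_power_p_minus_1[of "w ^ (p ^ N)"] Suc by simp
  then show ?case
    by (simp add: power_mult[symmetric] mult.commute)
qed simp

text \<open>The \<open>p\<close>-part of \<open>k\<close> is removed by the previous lemma; for \<open>k\<close> prime to \<open>p\<close> the sum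
  \<open>1 + w + \<dots> + w^(k-1)\<close> stays close to the unit \<open>k\<close>.\<close>
lemma power_ne_1_if_close_to_1:
  assumes "w \<noteq> 1" and "av (w - 1) ^ (p - 1) < 1 / real p" and "k \<ge> 1"
  shows "w ^ k \<noteq> 1"
  using assms
proof (induction k arbitrary: w rule: less_induct)
  case (less k)
  show ?case
  proof (cases "p dvd k")
    case True
    then obtain k' where k': "k = p * k'" ..
    then have "k' \<ge> 1" and "k' < k"
      using less.prems(3) p_gt_1 by auto
    have wp: "av (w ^ p - 1) = av (w - 1) / real p"
      using av_power_p_minus_1 less.prems(1,2) .
    then have "w ^ p \<noteq> 1"
      using less.prems(1) p_gt_1 by auto
    moreover have "av (w ^ p - 1) ^ (p - 1) < 1 / real p"
      using power_div_p_power_less_inverse_p[OF av_nonneg less.prems(2), of 1] wp by simp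
    ultimately show ?thesis
      using less.IH[OF \<open>k' < k\<close> _ _ \<open>k' \<ge> 1\<close>] by (simp add: k' power_mult)
  next
    case False
    then have "coprime k p"
      using prime_imp_coprime[OF prime_p] by (simp add: coprime_commute)
    then have av_k: "av (of_nat k) = 1"
      by (rule av_of_nat_coprime)
    have "av (w - 1) < 1"
      using less_1_if_power_less_inverse_p[OF av_nonneg less.prems(2)] .
    then have "av w = 1"
      by (rule av_eq_1_if_close_to_1)
    have "av (\<Sum>i<k. w ^ i - 1) \<le> av (w - 1)"
      using av_power_diff_le[OF \<open>av w = 1\<close> av_1] by (intro av_sum_le) (auto simp: av_nonneg)
    then have "av ((\<Sum>i<k. w ^ i - 1) + of_nat k) = 1"
      using \<open>av (w - 1) < 1\<close> av_k by (simp add: av_add_eq_right)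
    then have "(\<Sum>i<k. w ^ i) \<noteq> 0"
      by (auto simp: sum_subtractf)
    then show ?thesis
      using less.prems(1) power_diff_1_eq[of w k] by force
  qed
qed

lemma div_p_power_eventually_less:
  assumes "e > 0"
  obtains M where "\<And>N. N \<ge> M \<Longrightarrow> c / real p ^ N < e"
proof -
  have "(\<lambda>N. c / real p ^ N) \<longlonglongrightarrow> 0"
    using p_gt_1 by (intro LIMSEQ_divide_realpow_zero) simp
  then have "eventually (\<lambda>N. c / real p ^ N < e) sequentially"
    using assms by (rule order_tendstoD)
  with that show ?thesis
    unfolding eventually_sequentially by blast
qed

lemma conv_abs_if_le_div_p_power:
  assumes "\<And>N. av (s N - L) \<le> c / real p ^ N"
  shows "conv_abs av s L"
  unfolding conv_abs_def
proof (intro allI impI)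
  fix e :: real
  assume "e > 0"
  then obtain M where "\<And>N. N \<ge> M \<Longrightarrow> c / real p ^ N < e"
    using div_p_power_eventually_less by blast
  then show "\<exists>M. \<forall>N\<ge>M. av (s N - L) < e"
    using assms by (meson le_less_trans)
qed

end

section \<open>q-analogues and the q-binomial theorem\<close>

definition qfalling :: "'a::field \<Rightarrow> 'a \<Rightarrow> nat \<Rightarrow> 'a" where
  "qfalling q y m = (\<Prod>i<m. y - qnat q i)"

text \<open>\<open>qbinomial q r m\<close> is \<open>q^(m choose 2)\<close> times the Gaussian binomial coefficient \<open>[r choose m]_q\<close>.\<close>
definition qbinomial :: "'a::field \<Rightarrow> nat \<Rightarrow> nat \<Rightarrow> 'a" where
  "qbinomial q r m = qfalling q (qnat q r) m / qfact q m"

lemma qnat_0 [simp]: "qnat q 0 = 0"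
  by (simp add: qnat_def)

lemma qnat_Suc: "q \<noteq> 1 \<Longrightarrow> qnat q (Suc k) = 1 + q * qnat q k"
  by (simp add: qnat_def field_simps)

lemma qfact_Suc: "qfact q (Suc k) = qfact q k * qnat q (Suc k)"
  by (simp add: qfact_def)

lemma qfalling_Suc: "qfalling q y (Suc m) = qfalling q y m * (y - qnat q m)"
  by (simp add: qfalling_def)

lemma qbinomial_0 [simp]: "qbinomial q r 0 = 1"
  by (simp add: qbinomial_def qfalling_def qfact_def)

lemma qbinomial_Suc_self [simp]: "qbinomial q r (Suc r) = 0"
  by (simp add: qbinomial_def qfalling_Suc)

text \<open>The coefficients of \<open>\<Prod>i=1..m-1. (1 + [i]_q z)\<close>, read backwards, are those of
  \<open>\<Prod>i<m. (y - [i]_q)\<close>; the factor \<open>y - [0]_q = y\<close> accounts for the shift from \<open>m - 1\<close> to \<open>m\<close>.\<close>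
lemma qS1_sum_eq_qfalling:
  "(\<Sum>k=0..m. qS1 q (int m - 1) k * (-1) ^ k * y ^ (m - k)) = qfalling q y m"
proof (cases m)
  case 0
  then show ?thesis
    by (simp add: qS1_def qfalling_def)
next
  case (Suc d)
  define Q where "Q = (\<Prod>i\<in>{1..d}. [:1, qnat q i:])"
  have S1: "qS1 q (int m - 1) k = coeff Q k" for k
    unfolding qS1_def Q_def Suc by simp
  have "degree Q \<le> sum (degree \<circ> (\<lambda>i. [:1, qnat q i:])) {1..d}"
    unfolding Q_def by (rule degree_prod_sum_le) simp
  also have "\<dots> \<le> d"
    using sum_mono[of "{1..d}" "degree \<circ> (\<lambda>i. [:1, qnat q i:])" "\<lambda>_. 1"] by simp
  finally have deg: "degree Q < m"
    using Suc by simp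
  have falling: "qfalling q y m = y * (\<Prod>i\<in>{1..d}. y - qnat q i)"
    unfolding qfalling_def Suc prod.lessThan_Suc_shift by (simp add: prod.atLeast1_atMost_eq)
  show ?thesis
  proof (cases "y = 0")
    case True
    then have "(\<Sum>k=0..m. coeff Q k * (-1) ^ k * y ^ (m - k)) = coeff Q m * (-1) ^ m"
      by (subst sum.remove[of _ m]) (auto intro!: sum.neutral)
    then show ?thesis
      using deg True falling by (simp add: S1 coeff_eq_0)
  next
    case False
    define w where "w = - 1 / y"
    have "(\<Sum>k=0..m. coeff Q k * (-1) ^ k * y ^ (m - k)) = y ^ m * (\<Sum>k\<le>m. coeff Q k * w ^ k)"
      unfolding atLeast0AtMost sum_distrib_left
    proof (rule sum.cong)
      fix k assume "k \<in> {..m}"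
      then have "y ^ m = y ^ (m - k) * y ^ k"
        by (simp flip: power_add)
      then show "coeff Q k * (-1) ^ k * y ^ (m - k) = y ^ m * (coeff Q k * w ^ k)"
        using False by (simp add: w_def power_divide power_minus' field_simps)
    qed simp
    also have "(\<Sum>k\<le>m. coeff Q k * w ^ k) = poly Q w"
      unfolding poly_altdef using deg
      by (intro sum.mono_neutral_right) (auto simp: coeff_eq_0)
    also have "\<dots> = (\<Prod>i\<in>{1..d}. 1 + qnat q i * w)"
      unfolding Q_def by (simp add: poly_prod mult.commute)
    also have "y ^ m * \<dots> = y * (\<Prod>i\<in>{1..d}. y * (1 + qnat q i * w))"
      by (simp add: Suc prod.distrib)
    also have "(\<Prod>i\<in>{1..d}. y * (1 + qnat q i * w)) = (\<Prod>i\<in>{1..d}. y - qnat q i)"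
      using False by (intro prod.cong) (auto simp: w_def field_simps)
    finally show ?thesis
      using S1 falling by simp
  qed
qed

lemma binomial_sum_exchange:
  fixes X d s :: "'a::field" and c u :: "nat \<Rightarrow> 'a"
  shows "1 / d ^ n * (\<Sum>l\<le>n. of_nat (n choose l) * (-1) ^ l * X ^ l * (s * (\<Sum>m\<le>r. c m * u m ^ l)))
       = s * (\<Sum>m\<le>r. c m * ((1 - X * u m) / d) ^ n)"
proof -
  have "((1 - X * u m) / d) ^ n = 1 / d ^ n * (\<Sum>l\<le>n. of_nat (n choose l) * (-1) ^ l * X ^ l * u m ^ l)"
    for m
  proof -
    have "(1 - X * u m) ^ n = (\<Sum>l\<le>n. of_nat (n choose l) * (- (X * u m)) ^ l)"
      using binomial_ring[of "- (X * u m)" 1 n] by simp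
    then show ?thesis
      by (simp add: power_divide power_minus' power_mult_distrib ac_simps)
  qed
  then show ?thesis
    by (simp add: sum_distrib_left sum.swap[of _ "{..n}"] ac_simps)
qed

locale q_not_root_of_unity =
  fixes q :: "'a::field"
  assumes q_power_ne_1: "k \<ge> 1 \<Longrightarrow> q ^ k \<noteq> 1"
begin

lemma q_ne_1: "q \<noteq> 1"
  using q_power_ne_1[of 1] by simp

lemma qnat_ne_0: "k \<ge> 1 \<Longrightarrow> qnat q k \<noteq> 0"
  using q_power_ne_1[of k] q_ne_1 by (simp add: qnat_def)

lemma qfact_ne_0: "qfact q m \<noteq> 0"
  unfolding qfact_def using qnat_ne_0 by auto

lemma qbinomial_Suc_Suc:
  "qbinomial q (Suc r) (Suc k) = q ^ Suc k * qbinomial q r (Suc k) + q ^ k * qbinomial q r k"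
proof -
  have shift: "qfalling q (qnat q (Suc r)) (Suc k) = qnat q (Suc r) * q ^ k * qfalling q (qnat q r) k"
  proof -
    have "qnat q (Suc r) - qnat q (Suc i) = q * (qnat q r - qnat q i)" for i
      using q_ne_1 by (simp add: qnat_Suc algebra_simps)
    then show ?thesis
      unfolding qfalling_def prod.lessThan_Suc_shift by (simp add: prod.distrib)
  qed
  have split: "qnat q (Suc r) = q * (qnat q r - qnat q k) + qnat q (Suc k)"
    using q_ne_1 by (simp add: qnat_Suc algebra_simps)
  have "qbinomial q (Suc r) (Suc k)
      = q ^ k * qfalling q (qnat q r) k * qnat q (Suc r) / (qfact q k * qnat q (Suc k))"
    unfolding qbinomial_def shift qfact_Suc by (simp add: ac_simps)
  also have "\<dots> = q ^ Suc k * qbinomial q r (Suc k) + q ^ k * qbinomial q r k"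
    unfolding split qbinomial_def qfact_Suc qfalling_Suc
    using qfact_ne_0[of k] qnat_ne_0[of "Suc k"] by (simp add: field_simps)
  finally show ?thesis .
qed

lemma q_binomial_theorem:
  "(\<Prod>j\<in>{1..r}. 1 + z * q ^ (r - j)) = (\<Sum>m\<le>r. qbinomial q r m * z ^ m)"
proof (induction r arbitrary: z)
  case 0
  then show ?case
    by simp
next
  case (Suc r)
  define c where "c m = qbinomial q r m * q ^ m" for m
  have "(\<Prod>j\<in>{1..r}. 1 + z * q ^ (Suc r - j)) = (\<Prod>j\<in>{1..r}. 1 + (z * q) * q ^ (r - j))"
    by (intro prod.cong) (auto simp: Suc_diff_le)
  also have "\<dots> = (\<Sum>m\<le>r. c m * z ^ m)"
    unfolding Suc.IH c_def by (simp add: power_mult_distrib mult_ac)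
  finally have "(\<Prod>j\<in>{1..Suc r}. 1 + z * q ^ (Suc r - j))
      = (\<Sum>m\<le>r. c m * z ^ m) + (\<Sum>m\<le>r. c m * z ^ Suc m)"
    by (simp add: algebra_simps sum_distrib_left sum.distrib)
  also have "\<dots> = (\<Sum>m\<le>Suc r. qbinomial q (Suc r) m * z ^ m)"
  proof -
    have "qbinomial q (Suc r) m = c m + (if m = 0 then 0 else c (m - 1))" for m
      by (cases m) (simp_all add: c_def qbinomial_Suc_Suc)
    then have "(\<Sum>m\<le>Suc r. qbinomial q (Suc r) m * z ^ m)
        = (\<Sum>m\<le>Suc r. c m * z ^ m) + (\<Sum>m\<le>Suc r. (if m = 0 then 0 else c (m - 1)) * z ^ m)"
      by (simp add: algebra_simps sum.distrib)
    also have "(\<Sum>m\<le>Suc r. c m * z ^ m) = (\<Sum>m\<le>r. c m * z ^ m)"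
      by (simp add: c_def)
    also have "(\<Sum>m\<le>Suc r. (if m = 0 then 0 else c (m - 1)) * z ^ m) = (\<Sum>m\<le>r. c m * z ^ Suc m)"
      by (subst sum.atMost_Suc_shift) simp
    finally show ?thesis ..
  qed
  finally show ?case .
qed

end

section \<open>Powers of q with p-adic exponents\<close>

lemma zp_nonneg: "zp p x \<Longrightarrow> 0 \<le> x N"
  unfolding zp_def by blast

lemma zp_mod_eq:
  assumes "zp p x" and "n \<le> m"
  shows "x m mod int p ^ n = x n mod int p ^ n"
  using assms(2)
proof (induction m rule: dec_induct)
  case (step m)
  have "int p ^ n dvd int p ^ m"
    using step.hyps(1) by (simp add: le_imp_power_dvd)
  then have "x (Suc m) mod int p ^ n = x (Suc m) mod int p ^ m mod int p ^ n"
    by (simp add: mod_mod_cancel)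
  also have "\<dots> = x m mod int p ^ n"
    using assms(1) unfolding zp_def by simp
  finally show ?case
    using step.IH by simp
qed simp

locale padic_q = padic_abs_field av p for av :: "'a::field \<Rightarrow> real" and p +
  fixes q :: 'a
  assumes complete: "complete_abs av"
    and q_close_to_1: "av (1 - q) < real p powr (- 1 / (real p - 1))"
    and q_not_1: "q \<noteq> 1"
begin

lemma av_q_minus_1_power_less: "av (q - 1) ^ (p - 1) < 1 / real p"
proof -
  define \<rho> where "\<rho> = real p powr (- 1 / (real p - 1))"
  have "av (q - 1) < \<rho>"
    using q_close_to_1 av_minus_commute[of q 1] by (simp add: \<rho>_def)
  then have "av (q - 1) ^ (p - 1) < \<rho> ^ (p - 1)"
    using p_gt_1 av_nonneg[of "q - 1"] by (intro power_strict_mono) auto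
  also have "\<rho> ^ (p - 1) = real p powr (- 1 / (real p - 1) * real (p - 1))"
    using p_gt_1 by (simp add: \<rho>_def powr_realpow[symmetric] powr_powr)
  also have "\<dots> = 1 / real p"
    using p_gt_1 by (simp add: of_nat_diff powr_minus divide_inverse)
  finally show ?thesis .
qed

lemma q_power_ne_1: "k \<ge> 1 \<Longrightarrow> q ^ k \<noteq> 1"
  using power_ne_1_if_close_to_1[OF q_not_1 av_q_minus_1_power_less] .

sublocale q_not_root_of_unity q
  using q_power_ne_1 by unfold_locales

lemma av_q_minus_1_less_1: "av (q - 1) < 1"
  using less_1_if_power_less_inverse_p[OF av_nonneg av_q_minus_1_power_less] .

lemma av_q: "av q = 1"
  using av_eq_1_if_close_to_1[OF av_q_minus_1_less_1] .

lemma q_ne_0: "q \<noteq> 0"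
  using av_q by auto

lemma av_q_power_int: "av (q powi a) = 1"
  using av_power_int_eq_1[OF av_q] .

text \<open>The map \<open>a \<mapsto> q powi a\<close> is uniformly continuous for the \<open>p\<close>-adic metric on \<open>\<int>\<close>;
  this is what makes \<open>q^x\<close> meaningful for \<open>x \<in> \<int>\<^sub>p\<close>.\<close>
lemma av_q_power_int_diff_le:
  assumes "a mod int p ^ N = b mod int p ^ N"
  shows "av (q powi a - q powi b) \<le> av (q - 1) / real p ^ N"
proof -
  obtain c where c: "a = b + int p ^ N * c"
    using assms by (metis mod_eq_dvd_iff dvd_def add_diff_cancel_left' diff_add_cancel)
  define Q where "Q = q ^ (p ^ N)"
  have "q powi a = q powi b * Q powi c"
    using q_ne_0 unfolding c Q_def by (simp add: power_int_add power_int_mult flip: of_nat_power)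
  then have "q powi a - q powi b = q powi b * (Q powi c - 1)"
    by (simp add: algebra_simps)
  then have "av (q powi a - q powi b) = av (Q powi c - 1)"
    by (simp add: av_mult av_q_power_int)
  also have "\<dots> \<le> av (Q - 1)"
    by (rule av_power_int_minus_1_le) (simp add: Q_def av_power av_q)
  also have "\<dots> = av (q - 1) / real p ^ N"
    unfolding Q_def using av_power_p_power_minus_1[OF q_not_1 av_q_minus_1_power_less] .
  finally show ?thesis .
qed

lemma qpow_eq_power_int:
  assumes "\<And>N. 0 \<le> y N" and "\<And>N. y N mod int p ^ N = K mod int p ^ N"
  shows "qpow av q y = q powi K"
  unfolding qpow_def
proof (intro lim_abs_eqI conv_abs_if_le_div_p_power)
  fix N
  have "q ^ nat (y N) = q powi y N"
    using assms(1)[of N] by (simp flip: power_int_of_nat)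
  then show "av (q ^ nat (y N) - q powi K) \<le> av (q - 1) / real p ^ N"
    using av_q_power_int_diff_le[OF assms(2)] by simp
qed

context
  fixes x :: "nat \<Rightarrow> int"
  assumes x: "zp p x"
begin

lemma qpow_conv: "conv_abs av (\<lambda>N. q powi x N) (qpow av q x)"
proof -
  have close: "av (q powi x m - q powi x n) \<le> av (q - 1) / real p ^ n" if "n \<le> m" for m n
    using av_q_power_int_diff_le[OF zp_mod_eq[OF x that]] .
  have "\<exists>L. conv_abs av (\<lambda>N. q powi x N) L"
  proof (rule complete[unfolded complete_abs_def, rule_format])
    fix e :: real
    assume "e > 0"
    then obtain M where M: "av (q - 1) / real p ^ M < e"
      using div_p_power_eventually_less by blast
    have "av (q powi x m - q powi x n) < e" if "m \<ge> M" "n \<ge> M" for m n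
      using av_diff[of "q powi x m - q powi x M" "q powi x n - q powi x M"]
        close[OF \<open>m \<ge> M\<close>] close[OF \<open>n \<ge> M\<close>] M by simp
    then show "\<exists>N. \<forall>m\<ge>N. \<forall>n\<ge>N. av (q powi x m - q powi x n) < e"
      by blast
  qed
  then obtain L where L: "conv_abs av (\<lambda>N. q powi x N) L" ..
  have "qpow av q x = lim_abs av (\<lambda>N. q powi x N)"
    unfolding qpow_def using zp_nonneg[OF x] by (simp flip: power_int_of_nat)
  then show ?thesis
    using L lim_abs_eqI[OF L] by simp
qed

lemma av_power_int_minus_qpow_le: "av (q powi x N - qpow av q x) \<le> av (q - 1) / real p ^ N"
proof (rule field_le_epsilon)
  fix e :: real
  assume "e > 0"
  then obtain M where M: "\<And>m. m \<ge> M \<Longrightarrow> av (q powi x m - qpow av q x) < e"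
    using qpow_conv unfolding conv_abs_def by blast
  define m where "m = max M N"
  have "av (q powi x N - q powi x m) \<le> av (q - 1) / real p ^ N"
    using av_q_power_int_diff_le[OF zp_mod_eq[OF x, of N m]] by (simp add: m_def av_minus_commute)
  moreover have "av (q powi x m - qpow av q x) < e"
    using M by (simp add: m_def)
  ultimately show "av (q powi x N - qpow av q x) \<le> av (q - 1) / real p ^ N + e"
    using av_add[of "q powi x N - q powi x m" "q powi x m - qpow av q x"]
      divide_nonneg_pos[OF av_nonneg[of "q - 1"], of "real p ^ N"] p_gt_1 \<open>e > 0\<close>
    by (simp add: max_def split: if_splits)
qed

lemma av_qpow: "av (qpow av q x) = 1"
proof -
  have "av (qpow av q x - q powi x 0) \<le> av (q - 1)"
    using av_power_int_minus_qpow_le[of 0] by (simp add: av_minus_commute)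
  then have "av (qpow av q x - q powi x 0) < av (q powi x 0)"
    using av_q_minus_1_less_1 by (simp add: av_q_power_int)
  then show ?thesis
    using av_add_eq_right[of "qpow av q x - q powi x 0" "q powi x 0"] by (simp add: av_q_power_int)
qed

lemma qpow_affine:
  assumes "\<And>N. 0 \<le> y N" and "\<And>N. y N mod int p ^ N = (int l * x N + k) mod int p ^ N"
  shows "qpow av q y = qpow av q x ^ l * q powi k"
  unfolding qpow_def[of av q y]
proof (intro lim_abs_eqI conv_abs_if_le_div_p_power)
  fix N
  have "q powi (int l * x N + k) = (q powi x N) ^ l * q powi k"
    using q_ne_0 by (simp add: power_int_add power_int_mult mult.commute[of "int l"] flip: power_int_of_nat)
  then have "q ^ nat (y N) - qpow av q x ^ l * q powi k
      = (q powi y N - q powi (int l * x N + k)) + q powi k * ((q powi x N) ^ l - qpow av q x ^ l)"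
    using assms(1)[of N] by (simp add: algebra_simps flip: power_int_of_nat)
  moreover have "av (q powi y N - q powi (int l * x N + k)) \<le> av (q - 1) / real p ^ N"
    using av_q_power_int_diff_le[OF assms(2)] .
  moreover have "av (q powi k * ((q powi x N) ^ l - qpow av q x ^ l)) \<le> av (q - 1) / real p ^ N"
    using av_power_diff_le[OF av_q_power_int av_qpow, of "x N" l] av_power_int_minus_qpow_le[of N]
    by (simp add: av_mult av_q_power_int)
  ultimately show "av (q ^ nat (y N) - qpow av q x ^ l * q powi k) \<le> av (q - 1) / real p ^ N"
    using av_add[of "q powi y N - q powi (int l * x N + k)" "q powi k * ((q powi x N) ^ l - qpow av q x ^ l)"]
    by simp
qed

lemma qpow_scale: "qpow av q (zp_scale p (int l) x) = qpow av q x ^ l"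
  using qpow_affine[of "zp_scale p (int l) x" l 0] p_gt_1 by (simp add: zp_scale_def)

lemma qbr_add_of_nat: "qbr av q (zp_add p x (zp_of_int p (int m))) = (1 - qpow av q x * q ^ m) / (1 - q)"
  using qpow_affine[of "zp_add p x (zp_of_int p (int m))" 1 "int m"] p_gt_1
  by (simp add: qbr_def zp_add_def zp_of_int_def mod_add_right_eq)

end

lemma prod_one_plus_q_power_int:
  "(\<Prod>j\<in>{1..r}. 1 + q powi (int l + h - int j))
     = (\<Sum>m\<le>r. qbinomial q r m * (q powi (h - int r)) ^ m * (q ^ m) ^ l)"
proof -
  have "q powi (int l + h - int j) = (q powi (h - int r) * q ^ l) * q ^ (r - j)" if "j \<le> r" for j
  proof -
    have "int l + h - int j = int l + (h - int r) + int (r - j)"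
      using that by simp
    then have "q powi (int l + h - int j) = q powi int l * q powi (h - int r) * q powi int (r - j)"
      by (simp only: power_int_add[OF disjI1[OF q_ne_0]])
    then show ?thesis
      by (simp add: ac_simps)
  qed
  then have "(\<Prod>j\<in>{1..r}. 1 + q powi (int l + h - int j))
      = (\<Prod>j\<in>{1..r}. 1 + (q powi (h - int r) * q ^ l) * q ^ (r - j))"
    by (intro prod.cong) auto
  also have "\<dots> = (\<Sum>m\<le>r. qbinomial q r m * (q powi (h - int r)) ^ m * (q ^ m) ^ l)"
    unfolding q_binomial_theorem by (simp add: power_mult_distrib flip: power_mult mult.assoc) (simp add: mult.commute)
  finally show ?thesis .
qed

end

section \<open>Fermionic integrals and the closed form\<close>

locale fermionic_q = padic_q av p q for av :: "'a::field \<Rightarrow> real" and p q +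
  assumes odd_p: "odd p"
begin

lemma av_1_plus_q_power_int: "av (1 + q powi a) = 1"
proof -
  have "coprime 2 p"
    using odd_p by (simp add: coprime_commute)
  then have "av (of_nat 2) = 1"
    by (rule av_of_nat_coprime)
  moreover have "av (q powi a - 1) < 1"
    using av_power_int_minus_1_le[OF av_q, of a] av_q_minus_1_less_1 by linarith
  ultimately show ?thesis
    using av_add_eq_right[of "q powi a - 1" "of_nat 2"] by (simp add: add.commute)
qed

lemma one_plus_q_power_int_ne_0: "1 + q powi a \<noteq> 0"
  using av_1_plus_q_power_int[of a] by auto

text \<open>The alternating partial sums over \<open>0 \<le> k < p^N\<close> are \<open>D (1 + E^(p^N)) / (1 + E)\<close> with
  \<open>E = q powi a\<close>, because \<open>p^N\<close> is odd; and \<open>E^(p^N) \<rightarrow> 1\<close>.\<close>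
lemma fint_geometric:
  assumes "\<And>k. f (zp_of_int p (int k)) = D * (q powi a) ^ k"
  shows "fint p av f = 2 * D / (1 + q powi a)"
  unfolding fint_def
proof (intro lim_abs_eqI conv_abs_if_le_div_p_power)
  fix N
  define E where "E = q powi a"
  have "1 + E \<noteq> 0"
    unfolding E_def by (rule one_plus_q_power_int_ne_0)
  then have "- E \<noteq> 1"
    by (metis add.commute add_eq_0_iff)
  have "(\<Sum>k<p ^ N. f (zp_of_int p (int k)) * (-1) ^ k) = D * (\<Sum>k<p ^ N. (- E) ^ k)"
    unfolding sum_distrib_left using assms by (simp add: E_def power_minus' mult_ac)
  also have "\<dots> = D * (1 + E ^ (p ^ N)) / (1 + E)"
    using \<open>- E \<noteq> 1\<close> odd_p by (simp add: sum_gp_strict)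
  finally have "(\<Sum>k<p ^ N. f (zp_of_int p (int k)) * (-1) ^ k) - 2 * D / (1 + E)
      = D * (E ^ (p ^ N) - 1) / (1 + E)"
    using \<open>1 + E \<noteq> 0\<close> by (simp add: field_simps)
  moreover have "av (E ^ (p ^ N) - 1) \<le> av (q - 1) / real p ^ N"
    using av_q_power_int_diff_le[of "a * int p ^ N" N 0]
    by (simp add: E_def power_int_mult power_int_of_nat flip: of_nat_power power_int_of_nat)
  then have "av D * av (E ^ (p ^ N) - 1) \<le> av D * (av (q - 1) / real p ^ N)"
    by (rule mult_left_mono) (rule av_nonneg)
  ultimately show "av ((\<Sum>k<p ^ N. f (zp_of_int p (int k)) * (-1) ^ k) - 2 * D / (1 + q powi a))
      \<le> av D * av (q - 1) / real p ^ N"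
    using av_1_plus_q_power_int[of a] by (simp add: E_def av_divide av_mult)
qed

lemma mfint_geometric:
  assumes "\<And>ks. G (\<lambda>j. zp_of_int p (int (ks j))) = C * (\<Prod>j\<in>{1..s}. (q powi a j) ^ ks j)"
  shows "mfint p av s G = C * (\<Prod>j\<in>{1..s}. 2 / (1 + q powi a j))"
  using assms
proof (induction s arbitrary: G C)
  case 0
  then show ?case
    using "0.prems"[of "\<lambda>_. 0"] by simp
next
  case (Suc s)
  have inner: "mfint p av s (\<lambda>v. G (v(Suc s := zp_of_int p (int k))))
      = (C * (q powi a (Suc s)) ^ k) * (\<Prod>j\<in>{1..s}. 2 / (1 + q powi a j))" for k
  proof (rule Suc.IH)
    fix ks
    have "(\<lambda>j. zp_of_int p (int (ks j)))(Suc s := zp_of_int p (int k))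
        = (\<lambda>j. zp_of_int p (int ((ks(Suc s := k)) j)))"
      by auto
    moreover have "(\<Prod>j\<in>{1..s}. (q powi a j) ^ (ks(Suc s := k)) j) = (\<Prod>j\<in>{1..s}. (q powi a j) ^ ks j)"
      by (intro prod.cong) auto
    ultimately show "G ((\<lambda>j. zp_of_int p (int (ks j)))(Suc s := zp_of_int p (int k)))
        = C * (q powi a (Suc s)) ^ k * (\<Prod>j\<in>{1..s}. (q powi a j) ^ ks j)"
      using Suc.prems[of "ks(Suc s := k)"] by (simp add: ac_simps)
  qed
  have "mfint p av (Suc s) G = fint p av (\<lambda>y. mfint p av s (\<lambda>v. G (v(Suc s := y))))"
    by simp
  also have "\<dots> = 2 * (C * (\<Prod>j\<in>{1..s}. 2 / (1 + q powi a j))) / (1 + q powi a (Suc s))"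
    by (rule fint_geometric) (simp add: inner ac_simps)
  finally show ?case
    by (simp add: ac_simps)
qed

lemma mfint_Enq_integrand:
  "mfint p av r (\<lambda>v. qpow av q (zp_scale p (int l) (zp_sum p r v)) *
      (\<Prod>j=1..r. qpow av q (zp_scale p (h - int j) (v j))))
   = 2 ^ r / (\<Sum>m\<le>r. qbinomial q r m * (q powi (h - int r)) ^ m * (q ^ m) ^ l)"
proof -
  have "mfint p av r (\<lambda>v. qpow av q (zp_scale p (int l) (zp_sum p r v)) *
      (\<Prod>j=1..r. qpow av q (zp_scale p (h - int j) (v j))))
      = 1 * (\<Prod>j\<in>{1..r}. 2 / (1 + q powi (int l + h - int j)))"
  proof (rule mfint_geometric)
    fix ks :: "nat \<Rightarrow> nat"
    have sum: "qpow av q (zp_scale p (int l) (zp_sum p r (\<lambda>j. zp_of_int p (int (ks j)))))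
        = q ^ (l * (\<Sum>j\<in>{1..r}. ks j))"
    proof -
      have "qpow av q (zp_scale p (int l) (zp_sum p r (\<lambda>j. zp_of_int p (int (ks j)))))
          = q powi int (l * (\<Sum>j\<in>{1..r}. ks j))"
        using p_gt_1 by (intro qpow_eq_power_int)
          (simp_all add: zp_scale_def zp_sum_def zp_of_int_def mod_mult_right_eq mod_sum_eq)
      then show ?thesis
        by (simp only: power_int_of_nat)
    qed
    have factor: "qpow av q (zp_scale p (h - int j) (zp_of_int p (int k))) = (q powi (h - int j)) ^ k"
      for j k
      using p_gt_1 by (simp add: power_int_power' qpow_eq_power_int zp_scale_def zp_of_int_def mod_mult_right_eq)
    have "q powi (int l + h - int j) = q ^ l * q powi (h - int j)" for j
    proof -
      have "int l + h - int j = int l + (h - int j)"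
        by simp
      then show ?thesis
        by (simp only: power_int_add[OF disjI1[OF q_ne_0]] power_int_of_nat)
    qed
    then show "qpow av q (zp_scale p (int l) (zp_sum p r (\<lambda>j. zp_of_int p (int (ks j))))) *
        (\<Prod>j=1..r. qpow av q (zp_scale p (h - int j) (zp_of_int p (int (ks j)))))
        = 1 * (\<Prod>j\<in>{1..r}. (q powi (int l + h - int j)) ^ ks j)"
      by (simp add: sum factor power_mult power_sum prod.distrib power_mult_distrib)
  qed
  also have "\<dots> = 2 ^ r / (\<Prod>j\<in>{1..r}. 1 + q powi (int l + h - int j))"
    by (simp add: prod_dividef)
  also have "\<dots> = 2 ^ r / (\<Sum>m\<le>r. qbinomial q r m * (q powi (h - int r)) ^ m * (q ^ m) ^ l)"
    by (simp only: prod_one_plus_q_power_int)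
  finally show ?thesis .
qed

lemma Enq_eq_qS1_sum:
  assumes x: "zp p x"
  shows "Enq p av q h r n x =
    1 / 2 ^ r * (\<Sum>m=0..r. 1 / qfact q m *
      (\<Sum>k=0..m. q powi ((h - int r) * int m) * qS1 q (int m - 1) k * (-1) ^ k
         * qnat q r ^ (m - k) * qbr av q (zp_add p x (zp_of_int p (int m))) ^ n))"
proof -
  define X where "X = qpow av q x"
  define c where "c m = qbinomial q r m * (q powi (h - int r)) ^ m" for m
  have "Enq p av q h r n x = 1 / (1 - q) ^ n *
      (\<Sum>l\<le>n. of_nat (n choose l) * (-1) ^ l * X ^ l * (1 / 2 ^ r * (\<Sum>m\<le>r. c m * (q ^ m) ^ l)))"
    unfolding Enq_def atLeast0AtMost mfint_Enq_integrand qpow_scale[OF x] X_def c_def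
    by (simp add: mult.assoc)
  also have "\<dots> = 1 / 2 ^ r * (\<Sum>m\<le>r. c m * ((1 - X * q ^ m) / (1 - q)) ^ n)"
    by (rule binomial_sum_exchange)
  also have "\<dots> = 1 / 2 ^ r * (\<Sum>m=0..r. 1 / qfact q m *
      (\<Sum>k=0..m. q powi ((h - int r) * int m) * qS1 q (int m - 1) k * (-1) ^ k
         * qnat q r ^ (m - k) * qbr av q (zp_add p x (zp_of_int p (int m))) ^ n))"
  proof -
    have "c m * Y ^ n = 1 / qfact q m *
        (\<Sum>k=0..m. q powi ((h - int r) * int m) * qS1 q (int m - 1) k * (-1) ^ k
           * qnat q r ^ (m - k) * Y ^ n)" for m Y
    proof -
      have "(\<Sum>k=0..m. q powi ((h - int r) * int m) * qS1 q (int m - 1) k * (-1) ^ k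
           * qnat q r ^ (m - k) * Y ^ n) = (q powi (h - int r)) ^ m * Y ^ n * qfalling q (qnat q r) m"
        by (simp add: power_int_power' sum_distrib_left ac_simps flip: qS1_sum_eq_qfalling)
      then show ?thesis
        by (simp add: c_def qbinomial_def)
    qed
    then show ?thesis
      unfolding qbr_add_of_nat[OF x] X_def by (simp add: atLeast0AtMost)
  qed
  finally show ?thesis .
qed

end

theorem mainTheorem10:
  fixes p :: nat and av :: "'a::field_char_0 \<Rightarrow> real" and q :: 'a
    and h :: int and n r :: nat and x :: "nat \<Rightarrow> int"
  assumes "prime p" and "odd p"
    and "Cp_like p av"
    and "av (1 - q) < real p powr (- 1 / (real p - 1))"
    and "q \<noteq> 1"
    and "zp p x"
  shows "Enq p av q h r n x =
    1 / 2 ^ r * (\<Sum>m=0..r. 1 / qfact q m *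
      (\<Sum>k=0..m. q powi ((h - int r) * int m) * qS1 q (int m - 1) k * (-1) ^ k
         * qnat q r ^ (m - k) * qbr av q (zp_add p x (zp_of_int p (int m))) ^ n))"
proof -
  interpret fermionic_q av p q
    using assms(1-5) unfolding Cp_like_def by unfold_locales auto
  show ?thesis
    using Enq_eq_qS1_sum[OF assms(6)] .
qed

end
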